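(* Let $a,b$ be positive integers with $\gcd(a,b)=1$ such that $H_1=\langle a,b\rangle$ is minimally generated by two elements. Let $c\in H_1$ with $c>0$, $c\notin\{a,b\}$, and let $d\in\mathbb{N}$ with $d>1$ and $\gcd(c,d)=1$. Let $H=\langle da,db,c\rangle$ (the gluing of $H_1$ and $\mathbb{N}$ with respect to $d$ and $c$), $k$ a field, and $R=k[H]$. Then $R$ is Gorenstein and $$\#\mathcal{X}_{R}=d(ab-a-b)+(d-1)c+1,$$ where $\mathcal{X}_R$ is the set of graded ideals $I$ of $R$ with $R/I$ Gorenstein and $\mu_R(I)\ge 2$.
   Context: $R=k[H]=k[t^h\mid h\in H]\subseteq k[t]$ graded by $\deg t=1$; graded ideals are homogeneous ideals for this grading; $\mu_R(I)$ is the minimal number of generators. *)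

theory Defs
  imports "HOL-Computational_Algebra.Polynomial"
begin

definition sg2 :: "nat \<Rightarrow> nat \<Rightarrow> nat set" where
  "sg2 a b = {i * a + j * b | i j. True}"

definition sg3 :: "nat \<Rightarrow> nat \<Rightarrow> nat \<Rightarrow> nat set" where
  "sg3 a b c = {i * a + j * b + l * c | i j l. True}"

definition min_gens :: "nat set \<Rightarrow> nat set" where
  "min_gens S = {s \<in> S. s \<noteq> 0 \<and> \<not> (\<exists>x y. x \<in> S \<and> y \<in> S \<and> x \<noteq> 0 \<and> y \<noteq> 0 \<and> s = x + y)}"

definition sgring :: "nat set \<Rightarrow> 'k::field poly set" where
  "sgring H = {p. \<forall>n. coeff p n \<noteq> 0 \<longrightarrow> n \<in> H}"

definition max_ideal :: "nat set \<Rightarrow> 'k::field poly set" where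
  "max_ideal H = {p \<in> sgring H. coeff p 0 = 0}"

text \<open>Graded (homogeneous, deg t = 1) ideals of R.\<close>
definition graded_ideal :: "nat set \<Rightarrow> 'k::field poly set \<Rightarrow> bool" where
  "graded_ideal H I \<longleftrightarrow> I \<subseteq> sgring H \<and> 0 \<in> I
     \<and> (\<forall>p\<in>I. \<forall>q\<in>I. p + q \<in> I)
     \<and> (\<forall>r\<in>sgring H. \<forall>p\<in>I. r * p \<in> I)
     \<and> (\<forall>p\<in>I. \<forall>n. monom (coeff p n) n \<in> I)"

definition ideal_span :: "nat set \<Rightarrow> 'k::field poly set \<Rightarrow> 'k poly set" where
  "ideal_span H G = {(\<Sum>g\<in>G. r g * g) | r. \<forall>g\<in>G. r g \<in> sgring H}"

definition mu :: "nat set \<Rightarrow> 'k::field poly set \<Rightarrow> nat" where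
  "mu H I = (LEAST n. \<exists>G. finite G \<and> card G = n \<and> G \<subseteq> I \<and> ideal_span H G = I)"

text \<open>Socle of R/I (preimage in R): elements annihilated by the maximal ideal modulo I.\<close>
definition socle_elem :: "nat set \<Rightarrow> 'k::field poly set \<Rightarrow> 'k poly \<Rightarrow> bool" where
  "socle_elem H I s \<longleftrightarrow> s \<in> sgring H \<and> (\<forall>q\<in>max_ideal H. s * q \<in> I)"

text \<open>Artinian graded local ring R/I is Gorenstein iff its socle is a one-dimensional
  k-vector space.\<close>
definition artinian_gorenstein :: "nat set \<Rightarrow> 'k::field poly set \<Rightarrow> bool" where
  "artinian_gorenstein H I \<longleftrightarrow>
     (\<exists>s. socle_elem H I s \<and> s \<notin> I \<and>
        (\<forall>q. socle_elem H I q \<longrightarrow> (\<exists>c. q - smult c s \<in> I)))"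

text \<open>For I \<noteq> 0, R/I is Artinian graded local. For I = 0 (R itself, a one-dimensional
  Cohen-Macaulay graded domain) Gorenstein means: type 1, i.e. R/xR is Artinian
  Gorenstein for a nonzero homogeneous x in the maximal ideal.\<close>
definition gorenstein_quot :: "nat set \<Rightarrow> 'k::field poly set \<Rightarrow> bool" where
  "gorenstein_quot H I \<longleftrightarrow>
     (if I = {0}
      then (\<exists>c n. c \<noteq> 0 \<and> n \<in> H \<and> n > 0 \<and>
              artinian_gorenstein H {monom (c::'k) n * r | r. r \<in> sgring H})
      else artinian_gorenstein H I)"

definition gor_ideals :: "nat set \<Rightarrow> 'k::field poly set set" where
  "gor_ideals H = {I. graded_ideal H I \<and> gorenstein_quot H I \<and> mu H I \<ge> 2}"

end

theory Submission
  imports Defs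
begin

text \<open>Graded ideals of \<open>R = k[H]\<close> are monomial ideals, spanned by \<open>t\<^sup>e\<close> for \<open>e\<close> in a monoid ideal \<open>E\<close>
  of \<open>H\<close>, and \<open>R/I\<close> is Gorenstein exactly when the socle of \<open>E\<close> (the \<open>s \<notin> E\<close> with \<open>s + m \<in> E\<close> for all
  nonzero \<open>m \<in> H\<close>) is a single point \<open>s\<close>. If \<open>H\<close> is symmetric with Frobenius number \<open>F\<close>, this forces \<open>E\<close>
  to be the set of elements of \<open>H\<close> not dividing \<open>s\<close>, which is principal iff \<open>s - F \<in> H\<close>. Hence the
  Gorenstein ideals with at least two generators correspond to the \<open>s \<in> H\<close> with \<open>s - F \<notin> H\<close>; these are
  the \<open>x \<in> H\<close> and the \<open>x + F\<close> with \<open>x \<notin> H\<close>, for \<open>x \<in> {0..F}\<close>, so there are \<open>F + 1\<close> of them. Finally,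
  \<open>\<langle>a, b\<rangle>\<close> is symmetric with \<open>F = ab - a - b\<close>, and gluing with \<open>\<nat>\<close> preserves symmetry, giving
  \<open>F = d(ab - a - b) + (d - 1)c\<close> for \<open>\<langle>da, db, c\<rangle>\<close>.\<close>

section \<open>Monomial ideals of \<open>k[H]\<close>\<close>

text \<open>\<open>sgring E\<close> makes sense for any \<open>E \<subseteq> \<nat>\<close>: it is the \<open>k\<close>-span of the monomials \<open>t\<^sup>e\<close>, \<open>e \<in> E\<close>.
  For a monoid ideal \<open>E\<close> of \<open>H\<close> it is the monomial ideal of \<open>k[H]\<close> with exponent set \<open>E\<close>.\<close>

definition monoid_ideal :: "nat set \<Rightarrow> nat set \<Rightarrow> bool" where
  "monoid_ideal H E \<longleftrightarrow> E \<subseteq> H \<and> (\<forall>e\<in>E. \<forall>h\<in>H. e + h \<in> E)"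

definition exponents :: "'k::field poly set \<Rightarrow> nat set" where
  "exponents I = {n. monom 1 n \<in> I}"

definition socle :: "nat set \<Rightarrow> nat set \<Rightarrow> nat set" where
  "socle H E = {s \<in> H. s \<notin> E \<and> (\<forall>m\<in>H. m > 0 \<longrightarrow> s + m \<in> E)}"

lemma monoid_idealD: "monoid_ideal H E \<Longrightarrow> e \<in> E \<Longrightarrow> h \<in> H \<Longrightarrow> e + h \<in> E"
  unfolding monoid_ideal_def by blast

lemma monoid_ideal_subset: "monoid_ideal H E \<Longrightarrow> E \<subseteq> H"
  unfolding monoid_ideal_def by blast

lemma sgring_zero [simp]: "0 \<in> sgring E"
  unfolding sgring_def by simp

lemma sgring_add:
  assumes "p \<in> sgring E" "q \<in> sgring E"
  shows "p + q \<in> sgring E"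
proof -
  have "coeff p n \<noteq> 0 \<or> coeff q n \<noteq> 0" if "coeff (p + q) n \<noteq> 0" for n
    using that by auto
  then show ?thesis using assms unfolding sgring_def by blast
qed

lemma monom_in_sgring: "n \<in> E \<Longrightarrow> monom c n \<in> sgring E"
  unfolding sgring_def by simp

lemma sgring_mono: "E \<subseteq> E' \<Longrightarrow> sgring E \<subseteq> sgring E'"
  unfolding sgring_def by blast

lemma sgring_eq_zero_iff: "sgring E = ({0} :: 'k::field poly set) \<longleftrightarrow> E = {}"
proof
  assume "sgring E = ({0} :: 'k poly set)"
  then show "E = {}" using monom_in_sgring[of _ E "1::'k"] by fastforce
qed (auto simp: sgring_def poly_eq_iff)

lemma sum_mem:
  assumes "0 \<in> J" "\<And>p q. p \<in> J \<Longrightarrow> q \<in> J \<Longrightarrow> p + q \<in> J" "\<And>i. i \<in> A \<Longrightarrow> f i \<in> J"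
  shows "sum f A \<in> J"
  using assms(3) by (induction A rule: infinite_finite_induct) (auto simp: assms(1,2))

lemma sgring_subsetI:
  assumes "0 \<in> J" "\<And>p q. p \<in> J \<Longrightarrow> q \<in> J \<Longrightarrow> p + q \<in> J"
    and "\<And>c n. n \<in> E \<Longrightarrow> monom c n \<in> J"
  shows "sgring E \<subseteq> (J :: 'k::field poly set)"
proof
  fix p :: "'k poly" assume p: "p \<in> sgring E"
  have "monom (coeff p i) i \<in> J" for i
    using p assms(1,3) unfolding sgring_def by (cases "coeff p i = 0") auto
  then have "(\<Sum>i\<le>degree p. monom (coeff p i) i) \<in> J"
    by (intro sum_mem assms(1,2))
  then show "p \<in> J" by (simp add: poly_as_sum_of_monoms)
qed

lemma coeff_mult_nonzeroE:
  assumes "coeff (p * q) n \<noteq> 0"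
  obtains i where "i \<le> n" "coeff p i \<noteq> 0" "coeff q (n - i) \<noteq> 0"
proof -
  have "(\<Sum>i\<le>n. coeff p i * coeff q (n - i)) \<noteq> 0" using assms by (simp add: coeff_mult)
  then obtain i where "i \<in> {..n}" "coeff p i * coeff q (n - i) \<noteq> 0"
    by (rule sum.not_neutral_contains_not_neutral)
  then show ?thesis by (intro that) auto
qed

lemma mult_mem_sgring:
  assumes E: "monoid_ideal H E" and r: "r \<in> sgring H" and p: "p \<in> sgring E"
  shows "r * p \<in> sgring E"
  unfolding sgring_def mem_Collect_eq
proof (intro allI impI)
  fix n assume "coeff (r * p) n \<noteq> 0"
  then obtain i where "i \<le> n" "coeff r i \<noteq> 0" "coeff p (n - i) \<noteq> 0"
    by (rule coeff_mult_nonzeroE)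
  then have "i \<in> H" "n - i \<in> E" using r p unfolding sgring_def by auto
  then have "(n - i) + i \<in> E" using monoid_idealD[OF E] by blast
  then show "n \<in> E" using \<open>i \<le> n\<close> by simp
qed

lemma exponents_sgring: "exponents (sgring E :: 'k::field poly set) = E"
  unfolding exponents_def sgring_def by (auto split: if_splits)

lemma ideal_span_singleton: "ideal_span H {p} = {r * p | r. r \<in> sgring H}"
proof -
  have "(\<exists>r. x = (\<Sum>g\<in>{p}. r g * g) \<and> (\<forall>g\<in>{p}. r g \<in> sgring H)) \<longleftrightarrow>
    (\<exists>r. x = r * p \<and> r \<in> sgring H)" for x
    by (auto intro: exI[of _ "\<lambda>_. r" for r])
  then show ?thesis unfolding ideal_span_def by blast
qed

lemma zero_mem_ideal_span: "0 \<in> ideal_span H G"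
  unfolding ideal_span_def by (auto intro!: exI[of _ "\<lambda>_. 0"])

lemma ideal_span_add:
  assumes "p \<in> ideal_span H G" "q \<in> ideal_span H G"
  shows "p + q \<in> ideal_span H G"
proof -
  obtain r1 where r1: "p = (\<Sum>g\<in>G. r1 g * g)" "\<forall>g\<in>G. r1 g \<in> sgring H"
    using assms(1) unfolding ideal_span_def by blast
  obtain r2 where r2: "q = (\<Sum>g\<in>G. r2 g * g)" "\<forall>g\<in>G. r2 g \<in> sgring H"
    using assms(2) unfolding ideal_span_def by blast
  have "p + q = (\<Sum>g\<in>G. (r1 g + r2 g) * g)"
    unfolding r1 r2 by (simp add: sum.distrib distrib_right)
  moreover have "\<forall>g\<in>G. r1 g + r2 g \<in> sgring H" using r1(2) r2(2) sgring_add by blast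
  ultimately show ?thesis unfolding ideal_span_def by (intro CollectI exI[of _ "\<lambda>g. r1 g + r2 g"]) simp
qed

lemma mult_mem_ideal_span:
  assumes "finite G" "g0 \<in> G" "r0 \<in> sgring H"
  shows "r0 * g0 \<in> ideal_span H G"
proof -
  let ?r = "\<lambda>g. if g = g0 then r0 else 0"
  have "(\<Sum>g\<in>G. ?r g * g) = (\<Sum>g\<in>G. if g = g0 then r0 * g0 else 0)"
    by (rule sum.cong) auto
  also have "\<dots> = r0 * g0" using assms(1,2) by simp
  finally have "(\<Sum>g\<in>G. ?r g * g) = r0 * g0" .
  moreover have "\<forall>g\<in>G. ?r g \<in> sgring H" using assms(3) by simp
  ultimately show ?thesis unfolding ideal_span_def by (intro CollectI exI[of _ ?r]) simp
qed

lemma ideal_span_subset_sgring: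
  assumes E: "monoid_ideal H E" and G: "G \<subseteq> sgring E"
  shows "ideal_span H G \<subseteq> sgring E"
proof
  fix x assume "x \<in> ideal_span H G"
  then obtain r where r: "x = (\<Sum>g\<in>G. r g * g)" "\<forall>g\<in>G. r g \<in> sgring H"
    unfolding ideal_span_def by blast
  have "(\<Sum>g\<in>G. r g * g) \<in> sgring E"
    using r(2) G mult_mem_sgring[OF E] by (intro sum_mem sgring_zero sgring_add) blast+
  then show "x \<in> sgring E" using r(1) by simp
qed

lemma mu_zero: "mu H {0} = 0"
proof -
  have "ideal_span H {} = {0}" unfolding ideal_span_def by simp
  then show ?thesis unfolding mu_def by (intro Least_eq_0) (auto intro!: exI[of _ "{}"])
qed

definition lowest_degree :: "'a::zero poly \<Rightarrow> nat" where
  "lowest_degree p = (LEAST n. coeff p n \<noteq> 0)"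

lemma coeff_lowest_degree: "p \<noteq> 0 \<Longrightarrow> coeff p (lowest_degree p) \<noteq> 0"
  unfolding lowest_degree_def by (rule LeastI_ex) (metis coeff_0 poly_eqI)

lemma coeff_below_lowest_degree: "n < lowest_degree p \<Longrightarrow> coeff p n = 0"
  unfolding lowest_degree_def using not_less_Least by blast

lemma coeff_mult_lowest_degree:
  fixes p q :: "'a::idom poly"
  assumes "p \<noteq> 0" "q \<noteq> 0"
  shows "coeff (p * q) (lowest_degree p + lowest_degree q) \<noteq> 0"
proof -
  let ?N = "lowest_degree p + lowest_degree q"
  let ?f = "\<lambda>i. coeff p i * coeff q (?N - i)"
  have "?f i = 0" if "i \<le> ?N" "i \<noteq> lowest_degree p" for i
    using that coeff_below_lowest_degree[of i p] coeff_below_lowest_degree[of "?N - i" q]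
    by (cases "i < lowest_degree p") auto
  then have "sum ?f ({..?N} - {lowest_degree p}) = 0" by (intro sum.neutral) auto
  then have "coeff (p * q) ?N = ?f (lowest_degree p)"
    unfolding coeff_mult by (subst sum.remove[of _ "lowest_degree p"]) auto
  then show ?thesis using assms by (simp add: coeff_lowest_degree)
qed

locale nat_submonoid =
  fixes H :: "nat set"
  assumes zero_mem [simp]: "0 \<in> H"
    and add_mem: "x \<in> H \<Longrightarrow> y \<in> H \<Longrightarrow> x + y \<in> H"
begin

lemma mult_mem: "x \<in> H \<Longrightarrow> n * x \<in> H"
  by (induction n) (auto intro: add_mem)

lemma one_in_sgring: "1 \<in> sgring H"
  using monom_in_sgring[OF zero_mem, of 1] by (simp add: one_pCons)

lemma smult_mem_graded_ideal:
  assumes "graded_ideal H I" "p \<in> I"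
  shows "smult c p \<in> I"
proof -
  have "monom c 0 * p \<in> I"
    using assms monom_in_sgring[OF zero_mem] unfolding graded_ideal_def by blast
  then show ?thesis by (simp add: monom_0)
qed

lemma graded_ideal_eq_sgring:
  assumes I: "graded_ideal H I"
  shows "I = sgring (exponents I)"
proof
  show "I \<subseteq> sgring (exponents I)"
  proof
    fix p assume p: "p \<in> I"
    have "monom 1 n \<in> I" if "coeff p n \<noteq> 0" for n
    proof -
      have "monom (coeff p n) n \<in> I" using I p unfolding graded_ideal_def by blast
      then have "smult (inverse (coeff p n)) (monom (coeff p n) n) \<in> I"
        by (rule smult_mem_graded_ideal[OF I])
      then show ?thesis using that by (simp add: smult_monom)
    qed
    then show "p \<in> sgring (exponents I)" unfolding sgring_def exponents_def by blast
  qed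
next
  show "sgring (exponents I) \<subseteq> I"
  proof (rule sgring_subsetI)
    show "0 \<in> I" "\<And>p q. p \<in> I \<Longrightarrow> q \<in> I \<Longrightarrow> p + q \<in> I"
      using I unfolding graded_ideal_def by blast+
    fix c n assume "n \<in> exponents I"
    then have "monom 1 n \<in> I" unfolding exponents_def by simp
    then have "smult c (monom 1 n) \<in> I" by (rule smult_mem_graded_ideal[OF I])
    then show "monom c n \<in> I" by (simp add: smult_monom)
  qed
qed

lemma monoid_ideal_exponents:
  assumes I: "graded_ideal H I"
  shows "monoid_ideal H (exponents I)"
  unfolding monoid_ideal_def
proof (intro conjI ballI)
  show "exponents I \<subseteq> H"
    using I unfolding graded_ideal_def exponents_def sgring_def
    by (force simp: subset_iff)
  fix e h assume "e \<in> exponents I" "h \<in> H"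
  then have "monom 1 h * monom 1 e \<in> I"
    using I monom_in_sgring unfolding graded_ideal_def exponents_def by blast
  then show "e + h \<in> exponents I" unfolding exponents_def by (simp add: mult_monom add.commute)
qed

lemma graded_ideal_sgring:
  assumes E: "monoid_ideal H E"
  shows "graded_ideal H (sgring E :: 'k::field poly set)"
  unfolding graded_ideal_def
proof (intro conjI ballI allI)
  show "sgring E \<subseteq> (sgring H :: 'k poly set)"
    by (rule sgring_mono[OF monoid_ideal_subset[OF E]])
  fix p :: "'k poly" assume p: "p \<in> sgring E"
  show "q \<in> sgring E \<Longrightarrow> p + q \<in> sgring E" for q using p by (rule sgring_add)
  show "r \<in> sgring H \<Longrightarrow> r * p \<in> sgring E" for r using mult_mem_sgring[OF E _ p] .
  show "monom (coeff p n) n \<in> sgring E" for n using p unfolding sgring_def by auto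
qed simp

lemma socle_elem_sgring_iff:
  assumes E: "monoid_ideal H E"
  shows "socle_elem H (sgring E) q \<longleftrightarrow> q \<in> sgring (E \<union> socle H E)"
proof
  assume q: "socle_elem H (sgring E) q"
  show "q \<in> sgring (E \<union> socle H E)" unfolding sgring_def mem_Collect_eq
  proof (intro allI impI)
    fix n assume qn: "coeff q n \<noteq> 0"
    have "n + m \<in> E" if "m \<in> H" "m > 0" for m
    proof -
      have "monom 1 m \<in> max_ideal H"
        unfolding max_ideal_def using monom_in_sgring[OF \<open>m \<in> H\<close>] \<open>m > 0\<close> by simp
      then have "q * monom 1 m \<in> sgring E" using q unfolding socle_elem_def by blast
      moreover have "coeff (q * monom 1 m) (n + m) = coeff q n" by (simp add: mult.commute[of q] coeff_monom_mult)
      ultimately show ?thesis using qn unfolding sgring_def by auto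
    qed
    moreover have "n \<in> H" using q qn unfolding socle_elem_def sgring_def by blast
    ultimately show "n \<in> E \<union> socle H E" unfolding socle_def by blast
  qed
next
  assume q: "q \<in> sgring (E \<union> socle H E)"
  have "E \<union> socle H E \<subseteq> H" using monoid_ideal_subset[OF E] unfolding socle_def by blast
  then have "q \<in> sgring H" using q sgring_mono by blast
  moreover have "q * x \<in> sgring E" if x: "x \<in> max_ideal H" for x
    unfolding sgring_def mem_Collect_eq
  proof (intro allI impI)
    fix n assume "coeff (q * x) n \<noteq> 0"
    then obtain i where i: "i \<le> n" "coeff q i \<noteq> 0" "coeff x (n - i) \<noteq> 0"
      by (rule coeff_mult_nonzeroE)
    have "n - i \<in> H" using x i(3) unfolding max_ideal_def sgring_def by auto
    moreover have "n - i > 0" using x i(3) unfolding max_ideal_def by (cases "n - i") auto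
    moreover have "i \<in> E \<or> i \<in> socle H E" using q i(2) unfolding sgring_def by blast
    ultimately have "i + (n - i) \<in> E"
      using monoid_idealD[OF E] unfolding socle_def by blast
    then show "n \<in> E" using i(1) by simp
  qed
  ultimately show "socle_elem H (sgring E) q" unfolding socle_elem_def by blast
qed

lemma artinian_gorenstein_sgring_iff:
  assumes E: "monoid_ideal H E"
  shows "artinian_gorenstein H (sgring E :: 'k::field poly set) \<longleftrightarrow> (\<exists>s. socle H E = {s})"
proof
  assume "artinian_gorenstein H (sgring E :: 'k poly set)"
  then obtain s :: "'k poly" where s: "socle_elem H (sgring E) s" "s \<notin> sgring E"
    and unique: "\<And>q. socle_elem H (sgring E) q \<Longrightarrow> \<exists>c. q - smult c s \<in> sgring E"
    unfolding artinian_gorenstein_def by blast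
  obtain e0 where e0: "coeff s e0 \<noteq> 0" "e0 \<notin> E" using s(2) unfolding sgring_def by blast
  moreover have "s \<in> sgring (E \<union> socle H E)" using s(1) socle_elem_sgring_iff[OF E] by blast
  ultimately have e0_socle: "e0 \<in> socle H E" unfolding sgring_def by blast
  have "e1 = e0" if e1: "e1 \<in> socle H E" for e1
  proof -
    have "socle_elem H (sgring E) (monom (1::'k) e1)"
      unfolding socle_elem_sgring_iff[OF E] using e1 by (simp add: monom_in_sgring)
    then obtain c where c: "monom 1 e1 - smult c s \<in> sgring E" using unique by blast
    have "e1 \<notin> E" using e1 unfolding socle_def by blast
    then have "coeff (monom 1 e1 - smult c s) e1 = 0" using c unfolding sgring_def by blast
    moreover have "coeff (monom 1 e1 - smult c s) e0 = 0" using c e0(2) unfolding sgring_def by blast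
    ultimately show "e1 = e0" using e0(1) by (cases "e1 = e0") auto
  qed
  then show "\<exists>s. socle H E = {s}" using e0_socle by blast
next
  assume "\<exists>s. socle H E = {s}"
  then obtain s0 where s0: "socle H E = {s0}" by blast
  then have "s0 \<notin> E" unfolding socle_def by blast
  let ?s = "monom (1::'k) s0"
  have "socle_elem H (sgring E) ?s"
    unfolding socle_elem_sgring_iff[OF E] using s0 by (simp add: monom_in_sgring)
  moreover have "?s \<notin> sgring E" using \<open>s0 \<notin> E\<close> unfolding sgring_def by auto
  moreover have "q - smult (coeff q s0) ?s \<in> sgring E" if "socle_elem H (sgring E) q" for q
  proof -
    have "q \<in> sgring (E \<union> {s0})" using that s0 unfolding socle_elem_sgring_iff[OF E] by simp
    then show ?thesis unfolding sgring_def by (auto split: if_splits)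
  qed
  ultimately show "artinian_gorenstein H (sgring E :: 'k poly set)"
    unfolding artinian_gorenstein_def by blast
qed


lemma monoid_ideal_principal: "g \<in> H \<Longrightarrow> monoid_ideal H ((+) g ` H)"
  unfolding monoid_ideal_def by (auto simp: add.assoc intro: add_mem)

lemma ideal_span_monom:
  assumes g: "g \<in> H"
  shows "ideal_span H {monom 1 g} = sgring ((+) g ` H)"
proof
  show "ideal_span H {monom 1 g} \<subseteq> sgring ((+) g ` H)"
    by (rule ideal_span_subset_sgring[OF monoid_ideal_principal[OF g]])
      (use g in \<open>force intro: monom_in_sgring\<close>)
  show "sgring ((+) g ` H) \<subseteq> ideal_span H {monom 1 g}"
  proof (rule sgring_subsetI[OF zero_mem_ideal_span ideal_span_add])
    fix c n assume "n \<in> (+) g ` H"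
    then obtain h where h: "h \<in> H" "n = g + h" by blast
    have "monom c h * monom 1 g \<in> ideal_span H {monom 1 g}"
      by (rule mult_mem_ideal_span) (auto intro: monom_in_sgring h)
    then show "monom c n \<in> ideal_span H {monom 1 g}" using h(2) by (simp add: mult_monom add.commute)
  qed
qed

lemma mu_principal_le_1:
  assumes "g \<in> H"
  shows "mu H (sgring ((+) g ` H) :: 'k::field poly set) \<le> 1"
proof -
  have "monom (1::'k) g \<in> sgring ((+) g ` H)" by (rule monom_in_sgring) force
  then show ?thesis
    unfolding mu_def ideal_span_monom[OF assms, symmetric]
    by (intro Least_le exI[of _ "{monom 1 g}"]) auto
qed

text \<open>If \<open>sgring E = R p\<close>, then \<open>t\<^sup>e = r p\<close> forces \<open>e\<close> to be the sum of the lowest degrees of \<open>r\<close> and \<open>p\<close>.\<close>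

lemma principal_monoid_ideal:
  assumes E: "monoid_ideal H E" and "E \<noteq> {}"
    and p: "sgring E = ideal_span H {p :: 'k::field poly}"
  shows "\<exists>g\<in>H. E = (+) g ` H"
proof -
  have span: "sgring E = {r * p | r. r \<in> sgring H}" using p by (simp only: ideal_span_singleton)
  have "p \<in> sgring E" unfolding span using one_in_sgring by force
  obtain e0 where "e0 \<in> E" using \<open>E \<noteq> {}\<close> by blast
  then obtain r0 where "monom 1 e0 = r0 * p" using span monom_in_sgring by blast
  then have p0: "p \<noteq> 0" by (metis monom_eq_0_iff mult_zero_right one_neq_zero)
  define g where "g = lowest_degree p"
  have gE: "g \<in> E" using \<open>p \<in> sgring E\<close> coeff_lowest_degree[OF p0] unfolding g_def sgring_def by blast
  have "e \<in> (+) g ` H" if eE: "e \<in> E" for e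
  proof -
    obtain r where r: "monom 1 e = r * p" "r \<in> sgring H"
      using span monom_in_sgring[OF eE] by blast
    then have r0: "r \<noteq> 0" by (metis monom_eq_0_iff mult_zero_left one_neq_zero)
    have "coeff (monom (1::'k) e) (lowest_degree r + g) \<noteq> 0"
      using coeff_mult_lowest_degree[OF r0 p0] r(1) unfolding g_def by simp
    then have "e = g + lowest_degree r" by (simp split: if_splits)
    moreover have "lowest_degree r \<in> H"
      using r(2) coeff_lowest_degree[OF r0] unfolding sgring_def by blast
    ultimately show ?thesis by blast
  qed
  moreover have "(+) g ` H \<subseteq> E" using gE monoid_idealD[OF E] by blast
  ultimately show ?thesis using gE monoid_ideal_subset[OF E] by blast
qed

text \<open>Every exponent reduces, by repeatedly subtracting \<open>m\<close>, to one of size at most \<open>N + m\<close>.\<close>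

lemma sgring_finitely_generated:
  assumes E: "monoid_ideal H E" and m: "m \<in> H" "m > 0" and N: "\<And>n. N \<le> n \<Longrightarrow> n \<in> E"
  shows "\<exists>G. finite G \<and> G \<subseteq> sgring E \<and> ideal_span H G = (sgring E :: 'k::field poly set)"
proof -
  let ?B = "{e \<in> E. e \<le> N + m}"
  let ?G = "(\<lambda>e. monom (1::'k) e) ` ?B"
  have GE: "?G \<subseteq> sgring E" using monom_in_sgring by blast
  have reduce: "\<exists>g\<in>?B. \<exists>h\<in>H. n = g + h" if "n \<in> E" for n
    using that
  proof (induction n rule: less_induct)
    case (less n)
    show ?case
    proof (cases "n \<le> N + m")
      case False
      then have "n - m \<in> E" "n - m < n" using N m by auto
      then obtain g h where "g \<in> ?B" "h \<in> H" "n - m = g + h" using less.IH by blast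
      moreover have "n = g + (h + m)" using False \<open>n - m = g + h\<close> by auto
      ultimately show ?thesis using add_mem m(1) by blast
    qed (use less.prems in force)
  qed
  have "sgring E \<subseteq> ideal_span H ?G"
  proof (rule sgring_subsetI[OF zero_mem_ideal_span ideal_span_add])
    fix c n assume "n \<in> E"
    then obtain g h where gh: "g \<in> ?B" "h \<in> H" "n = g + h" using reduce by blast
    have "monom c h * monom 1 g \<in> ideal_span H ?G"
      by (rule mult_mem_ideal_span) (use gh monom_in_sgring in auto)
    then show "monom c n \<in> ideal_span H ?G" using gh(3) by (simp add: mult_monom add.commute)
  qed
  moreover have "ideal_span H ?G \<subseteq> sgring E" by (rule ideal_span_subset_sgring[OF E GE])
  ultimately show ?thesis using GE by (intro exI[of _ ?G]) auto
qed

lemma mu_ge_2: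
  assumes E: "monoid_ideal H E" and "E \<noteq> {}"
    and fg: "\<exists>G. finite G \<and> G \<subseteq> sgring E \<and> ideal_span H G = (sgring E :: 'k::field poly set)"
    and nonprincipal: "\<not> (\<exists>g\<in>H. E = (+) g ` H)"
  shows "2 \<le> mu H (sgring E :: 'k::field poly set)"
proof -
  let ?P = "\<lambda>n. \<exists>G. finite G \<and> card G = n \<and> G \<subseteq> sgring E \<and> ideal_span H G = (sgring E :: 'k poly set)"
  have "?P (mu H (sgring E :: 'k poly set))" unfolding mu_def
    by (rule LeastI_ex) (use fg in blast)
  then obtain G where G: "finite G" "card G = mu H (sgring E :: 'k poly set)"
    "ideal_span H G = (sgring E :: 'k poly set)" by blast
  have "card G \<noteq> 0"
  proof
    assume "card G = 0"
    then have "G = {}" using G(1) by simp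
    then have "sgring E = ({0} :: 'k poly set)" using G(3) unfolding ideal_span_def by simp
    then show False using \<open>E \<noteq> {}\<close> sgring_eq_zero_iff by blast
  qed
  moreover have "card G \<noteq> 1"
  proof
    assume "card G = 1"
    then obtain p where "G = {p}" by (rule card_1_singletonE)
    then show False using principal_monoid_ideal[OF E \<open>E \<noteq> {}\<close>] G(3) nonprincipal by metis
  qed
  ultimately show ?thesis using G(2) by linarith
qed

text \<open>The largest monoid ideal of \<open>H\<close> not containing \<open>s\<close>.\<close>

definition non_divisors :: "nat \<Rightarrow> nat set" where
  "non_divisors s = {h \<in> H. \<not> (h \<le> s \<and> s - h \<in> H)}"

lemma monoid_ideal_non_divisors: "monoid_ideal H (non_divisors s)"
  unfolding monoid_ideal_def
proof (intro conjI ballI)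
  fix e h assume e: "e \<in> non_divisors s" and h: "h \<in> H"
  have "\<not> (e + h \<le> s \<and> s - (e + h) \<in> H)"
  proof
    assume "e + h \<le> s \<and> s - (e + h) \<in> H"
    then have "e \<le> s \<and> s - e \<in> H" using add_mem[OF _ h, of "s - (e + h)"] by auto
    then show False using e unfolding non_divisors_def by blast
  qed
  then show "e + h \<in> non_divisors s" using e h add_mem unfolding non_divisors_def by blast
qed (auto simp: non_divisors_def)

lemma socle_non_divisors:
  assumes s: "s \<in> H"
  shows "socle H (non_divisors s) = {s}"
proof -
  have "s \<in> socle H (non_divisors s)"
    using s add_mem unfolding socle_def non_divisors_def by auto
  moreover have "t = s" if t: "t \<in> socle H (non_divisors s)" for t
  proof (rule ccontr)
    assume "t \<noteq> s"
    have "t \<le> s" "s - t \<in> H" using t unfolding socle_def non_divisors_def by auto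
    then have "t + (s - t) \<in> non_divisors s"
      using t \<open>t \<noteq> s\<close> unfolding socle_def by auto
    then show False using \<open>t \<le> s\<close> unfolding non_divisors_def by simp
  qed
  ultimately show ?thesis by blast
qed

end

section \<open>Symmetric semigroups\<close>

definition symmetric_frobenius :: "nat set \<Rightarrow> int \<Rightarrow> bool" where
  "symmetric_frobenius H F \<longleftrightarrow> (\<forall>z. z \<in> int ` H \<longleftrightarrow> F - z \<notin> int ` H)"

locale symmetric_semigroup = nat_submonoid +
  fixes F :: nat
  assumes symmetric: "symmetric_frobenius H (int F)"
begin

lemma symmetric_nat: "int n \<in> int ` H \<longleftrightarrow> int F - int n \<notin> int ` H"
  using symmetric unfolding symmetric_frobenius_def by blast

lemma frobenius_not_mem: "F \<notin> H"
  using symmetric_nat[of F] by (auto simp: image_iff)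

lemma mem_if_frobenius_less: "F < n \<Longrightarrow> n \<in> H"
  using symmetric_nat[of n] by (auto simp: image_iff)

lemma mem_iff_reflect: "n \<le> F \<Longrightarrow> n \<in> H \<longleftrightarrow> F - n \<notin> H"
  using symmetric_nat[of n] by (auto simp: image_iff of_nat_diff[symmetric] simp del: of_nat_diff)

lemma non_divisors_mem: "s + F < n \<Longrightarrow> n \<in> non_divisors s"
  unfolding non_divisors_def using mem_if_frobenius_less by auto

lemma principal_eq_non_divisors:
  assumes g: "g \<in> H"
  shows "(+) g ` H = non_divisors (g + F)"
proof
  show "(+) g ` H \<subseteq> non_divisors (g + F)"
  proof
    fix x assume "x \<in> (+) g ` H"
    then obtain h where h: "h \<in> H" "x = g + h" by blast
    have "\<not> (x \<le> g + F \<and> g + F - x \<in> H)"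
      using h mem_iff_reflect[of h] by (cases "h \<le> F") auto
    then show "x \<in> non_divisors (g + F)" using h g add_mem unfolding non_divisors_def by blast
  qed
next
  show "non_divisors (g + F) \<subseteq> (+) g ` H"
  proof
    fix x assume "x \<in> non_divisors (g + F)"
    then have x: "x \<in> H" "\<not> (x \<le> g + F \<and> g + F - x \<in> H)" unfolding non_divisors_def by auto
    have "g \<le> x" using x(2) mem_if_frobenius_less[of "g + F - x"] by (cases "g \<le> x") auto
    moreover have "x - g \<in> H"
    proof (cases "x - g \<le> F")
      case True
      then have "F - (x - g) = g + F - x" using \<open>g \<le> x\<close> by simp
      then show ?thesis using x(2) True mem_iff_reflect[of "x - g"] by simp
    qed (use mem_if_frobenius_less in simp)
    ultimately show "x \<in> (+) g ` H" by (metis image_eqI le_add_diff_inverse)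
  qed
qed

text \<open>Since \<open>H\<close> has finite complement, the multiples \<open>t \<notin> E\<close> of \<open>h\<close> are bounded; a maximal one lies in the
  socle of \<open>E\<close>.\<close>

lemma divides_socle_elem:
  assumes E: "monoid_ideal H E" and "E \<noteq> {}" and h: "h \<in> H" "h \<notin> E"
  obtains t where "t \<in> socle H E" "h \<le> t" "t - h \<in> H"
proof -
  obtain e0 where e0: "e0 \<in> E" using \<open>E \<noteq> {}\<close> by blast
  let ?A = "{t \<in> H. t \<notin> E \<and> h \<le> t \<and> t - h \<in> H}"
  have "?A \<subseteq> {..e0 + F}"
  proof
    fix t assume t: "t \<in> ?A"
    show "t \<in> {..e0 + F}"
    proof (rule ccontr)
      assume "t \<notin> {..e0 + F}"
      then have "t - e0 \<in> H" using mem_if_frobenius_less by simp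
      then have "e0 + (t - e0) \<in> E" by (rule monoid_idealD[OF E e0])
      then show False using t \<open>t \<notin> {..e0 + F}\<close> by auto
    qed
  qed
  then have fin: "finite ?A" by (rule finite_subset) simp
  have "h \<in> ?A" using h by simp
  define t where "t = Max ?A"
  have tA: "t \<in> ?A" unfolding t_def using fin \<open>h \<in> ?A\<close> by (intro Max_in) auto
  have "t + m \<in> E" if "m \<in> H" "m > 0" for m
  proof (rule ccontr)
    assume "t + m \<notin> E"
    moreover have "t + m - h \<in> H"
    proof -
      have "t + m - h = (t - h) + m" using tA by simp
      also have "\<dots> \<in> H" using tA that(1) add_mem by blast
      finally show ?thesis .
    qed
    ultimately have "t + m \<in> ?A" using tA that add_mem by auto
    then show False using Max_ge[OF fin, of "t + m"] that(2) unfolding t_def by simp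
  qed
  then have "t \<in> socle H E" using tA unfolding socle_def by blast
  moreover have "h \<le> t" "t - h \<in> H" using tA by auto
  ultimately show ?thesis by (rule that)
qed

lemma monoid_ideal_eq_non_divisors:
  assumes E: "monoid_ideal H E" and "E \<noteq> {}" and socle: "socle H E = {s}"
  shows "E = non_divisors s"
proof
  have "s \<notin> E" using socle unfolding socle_def by auto
  then show "E \<subseteq> non_divisors s"
    using monoid_idealD[OF E] monoid_ideal_subset[OF E]
    unfolding non_divisors_def by (auto, metis le_add_diff_inverse)
  show "non_divisors s \<subseteq> E"
  proof
    fix h assume h: "h \<in> non_divisors s"
    show "h \<in> E"
    proof (rule ccontr)
      assume "h \<notin> E"
      moreover have "h \<in> H" using h unfolding non_divisors_def by blast
      ultimately obtain t where "t \<in> socle H E" "h \<le> t" "t - h \<in> H"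
        using divides_socle_elem[OF E \<open>E \<noteq> {}\<close>] by blast
      then have "h \<le> s" "s - h \<in> H" using socle by auto
      then show False using h unfolding non_divisors_def by blast
    qed
  qed
qed

lemma non_divisors_nonprincipal:
  assumes s: "s \<in> H" and "\<not> (F \<le> s \<and> s - F \<in> H)"
  shows "\<not> (\<exists>g\<in>H. non_divisors s = (+) g ` H)"
proof
  assume "\<exists>g\<in>H. non_divisors s = (+) g ` H"
  then obtain g where g: "g \<in> H" and principal: "non_divisors s = (+) g ` H" by blast
  have "g \<noteq> 0"
  proof
    assume "g = 0"
    then have "s \<in> non_divisors s" using principal s by simp
    then show False unfolding non_divisors_def by simp
  qed
  then have "g + F \<in> H" using mem_if_frobenius_less by simp
  have "{s} = socle H (non_divisors s)" using socle_non_divisors[OF s] by simp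
  also have "\<dots> = socle H (non_divisors (g + F))" using principal principal_eq_non_divisors[OF g] by simp
  also have "\<dots> = {g + F}" by (rule socle_non_divisors) fact
  finally show False using assms(2) g by simp
qed

definition nonprincipal_socles :: "nat set" where
  "nonprincipal_socles = {s \<in> H. \<not> (F \<le> s \<and> s - F \<in> H)}"

lemma gor_ideal_eq_sgring_non_divisors:
  fixes I :: "'k::field poly set"
  assumes "I \<in> gor_ideals H"
  obtains s where "s \<in> nonprincipal_socles" "I = sgring (non_divisors s)"
proof -
  have I: "graded_ideal H I" "gorenstein_quot H I" "2 \<le> mu H I"
    using assms unfolding gor_ideals_def by auto
  define E where "E = exponents I"
  have E: "monoid_ideal H E" and IE: "I = sgring E"
    unfolding E_def using monoid_ideal_exponents graded_ideal_eq_sgring I(1) by blast+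
  have "I \<noteq> {0}" using I(3) by (auto simp: mu_zero)
  then have "E \<noteq> {}" "artinian_gorenstein H I"
    using I(2) IE sgring_eq_zero_iff unfolding gorenstein_quot_def by auto
  then obtain s where socle: "socle H E = {s}" using artinian_gorenstein_sgring_iff[OF E] IE by blast
  then have "s \<in> H" unfolding socle_def by blast
  have E_eq: "E = non_divisors s" by (rule monoid_ideal_eq_non_divisors[OF E \<open>E \<noteq> {}\<close> socle])
  have "\<not> (F \<le> s \<and> s - F \<in> H)"
  proof
    assume s: "F \<le> s \<and> s - F \<in> H"
    then have "(+) (s - F) ` H = non_divisors (s - F + F)" by (intro principal_eq_non_divisors) simp
    then have "E = (+) (s - F) ` H" using E_eq s by simp
    moreover have "mu H (sgring ((+) (s - F) ` H) :: 'k poly set) \<le> 1"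
      using s by (intro mu_principal_le_1) blast
    ultimately show False using I(3) IE by simp
  qed
  then show ?thesis using that \<open>s \<in> H\<close> IE E_eq unfolding nonprincipal_socles_def by blast
qed

lemma sgring_non_divisors_mem_gor_ideals:
  assumes "s \<in> nonprincipal_socles"
  shows "(sgring (non_divisors s) :: 'k::field poly set) \<in> gor_ideals H"
proof -
  have s: "s \<in> H" "\<not> (F \<le> s \<and> s - F \<in> H)" using assms unfolding nonprincipal_socles_def by auto
  note E = monoid_ideal_non_divisors[of s]
  have "s + F + 1 \<in> non_divisors s" by (rule non_divisors_mem) simp
  then have ne: "non_divisors s \<noteq> {}" by blast
  have "artinian_gorenstein H (sgring (non_divisors s) :: 'k poly set)"
    unfolding artinian_gorenstein_sgring_iff[OF E] socle_non_divisors[OF s(1)] by blast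
  moreover have "(sgring (non_divisors s) :: 'k poly set) \<noteq> {0}" using ne sgring_eq_zero_iff by blast
  ultimately have "gorenstein_quot H (sgring (non_divisors s) :: 'k poly set)"
    unfolding gorenstein_quot_def by simp
  moreover have "\<exists>G. finite G \<and> G \<subseteq> sgring (non_divisors s)
      \<and> ideal_span H G = (sgring (non_divisors s) :: 'k poly set)"
    by (rule sgring_finitely_generated[where N = "s + F + 1", OF E mem_if_frobenius_less[of "F + 1"]])
      (auto intro: non_divisors_mem)
  then have "2 \<le> mu H (sgring (non_divisors s) :: 'k poly set)"
    by (rule mu_ge_2[OF E ne _ non_divisors_nonprincipal[OF s]])
  ultimately show ?thesis using graded_ideal_sgring[OF E] unfolding gor_ideals_def by blast
qed

lemma gor_ideals_eq:
  "gor_ideals H = (\<lambda>s. sgring (non_divisors s) :: 'k::field poly set) ` nonprincipal_socles"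
  using gor_ideal_eq_sgring_non_divisors sgring_non_divisors_mem_gor_ideals by blast

lemma inj_on_sgring_non_divisors:
  "inj_on (\<lambda>s. sgring (non_divisors s) :: 'k::field poly set) nonprincipal_socles"
proof
  fix s t assume "s \<in> nonprincipal_socles" "t \<in> nonprincipal_socles"
    and "(sgring (non_divisors s) :: 'k poly set) = sgring (non_divisors t)"
  then have "non_divisors s = non_divisors t" using exponents_sgring[where 'k = 'k] by metis
  moreover have "s \<in> H" "t \<in> H"
    using \<open>s \<in> nonprincipal_socles\<close> \<open>t \<in> nonprincipal_socles\<close> unfolding nonprincipal_socles_def by auto
  ultimately show "s = t" using socle_non_divisors by (metis singleton_inject)
qed

text \<open>The bijection \<open>{0..F} \<rightarrow> nonprincipal_socles\<close> fixes the elements of \<open>H\<close> and shifts each gap \<open>x\<close> to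
  \<open>x + F\<close>.\<close>

lemma card_nonprincipal_socles: "finite nonprincipal_socles \<and> card nonprincipal_socles = F + 1"
proof -
  let ?f = "\<lambda>x. if x \<in> H then x else x + F"
  have gap_pos: "x \<notin> H \<Longrightarrow> 0 < x" for x by (rule gr0I) simp
  have "bij_betw ?f {0..F} nonprincipal_socles"
  proof (rule bij_betw_imageI)
    show "inj_on ?f {0..F}"
      using frobenius_not_mem gap_pos by (auto simp: inj_on_def le_less split: if_splits)
    show "?f ` {0..F} = nonprincipal_socles"
    proof (intro equalityI subsetI)
      fix y assume "y \<in> ?f ` {0..F}"
      then obtain x where x: "x \<le> F" "y = ?f x" by auto
      then show "y \<in> nonprincipal_socles"
        using frobenius_not_mem gap_pos[of x] mem_if_frobenius_less[of "x + F"]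
        unfolding nonprincipal_socles_def by (cases "x = F") auto
    next
      fix s assume "s \<in> nonprincipal_socles"
      then have s: "s \<in> H" "\<not> (F \<le> s \<and> s - F \<in> H)" unfolding nonprincipal_socles_def by auto
      show "s \<in> ?f ` {0..F}"
      proof (cases "s \<le> F")
        case False
        then have "s - F \<notin> H" using s(2) by simp
        then have "s - F \<le> F" using mem_if_frobenius_less[of "s - F"] by (auto simp: not_less[symmetric])
        then show ?thesis using \<open>s - F \<notin> H\<close> False by (intro image_eqI[of _ _ "s - F"]) auto
      qed (use s in auto)
    qed
  qed
  then have "finite nonprincipal_socles" "card {0..F} = card nonprincipal_socles"
    using bij_betw_finite bij_betw_same_card by blast+
  then show ?thesis by simp
qed

text \<open>\<open>k[H]\<close> is Gorenstein: modulo the monomial \<open>t\<^bsup>F+1\<^esup>\<close> its socle is spanned by \<open>t\<^bsup>2F+1\<^esup>\<close>.\<close>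

lemma gorenstein_quot_zero: "gorenstein_quot H ({0} :: 'k::field poly set)"
proof -
  let ?n = "F + 1"
  have n: "?n \<in> H" "?n + F \<in> H" using mem_if_frobenius_less by auto
  have "{monom (1::'k) ?n * r | r. r \<in> sgring H} = sgring ((+) ?n ` H)"
    using ideal_span_monom[OF n(1)] by (simp add: ideal_span_singleton mult.commute)
  moreover have "socle H ((+) ?n ` H) = {?n + F}"
    using principal_eq_non_divisors[OF n(1)] socle_non_divisors[OF n(2)] by simp
  ultimately have "artinian_gorenstein H {monom (1::'k) ?n * r | r. r \<in> sgring H}"
    using artinian_gorenstein_sgring_iff[OF monoid_ideal_principal[OF n(1)]] by simp
  then show ?thesis using n(1) unfolding gorenstein_quot_def by (intro if_P[THEN iffD2] exI) auto
qed

theorem gor_ideals_symmetric: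
  "gorenstein_quot H ({0} :: 'k::field poly set)
   \<and> finite (gor_ideals H :: 'k poly set set)
   \<and> card (gor_ideals H :: 'k poly set set) = F + 1"
  using gorenstein_quot_zero card_nonprincipal_socles
    card_image[OF inj_on_sgring_non_divisors[where 'k = 'k]]
  unfolding gor_ideals_eq by simp

end

section \<open>Two-generated semigroups and gluing\<close>

definition glue :: "nat \<Rightarrow> nat set \<Rightarrow> nat \<Rightarrow> nat set" where
  "glue d H c = {d * h + l * c | h l. h \<in> H}"

lemma sg3_eq_glue: "sg3 (d * a) (d * b) c = glue d (sg2 a b) c"
proof (intro equalityI subsetI)
  fix x assume "x \<in> sg3 (d * a) (d * b) c"
  then obtain i j l where "x = i * (d * a) + j * (d * b) + l * c" unfolding sg3_def by blast
  then have "x = d * (i * a + j * b) + l * c" by (simp add: algebra_simps)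
  then show "x \<in> glue d (sg2 a b) c" unfolding glue_def sg2_def by blast
next
  fix x assume "x \<in> glue d (sg2 a b) c"
  then obtain i j l where "x = d * (i * a + j * b) + l * c" unfolding glue_def sg2_def by blast
  then have "x = i * (d * a) + j * (d * b) + l * c" by (simp add: algebra_simps)
  then show "x \<in> sg3 (d * a) (d * b) c" unfolding sg3_def by blast
qed

lemma nat_submonoid_sg2: "nat_submonoid (sg2 a b)"
proof
  show "0 \<in> sg2 a b" unfolding sg2_def by force
  fix x y assume "x \<in> sg2 a b" "y \<in> sg2 a b"
  then obtain i j i' j' where "x = i * a + j * b" "y = i' * a + j' * b" unfolding sg2_def by blast
  then have "x + y = (i + i') * a + (j + j') * b" by (simp add: algebra_simps)
  then show "x + y \<in> sg2 a b" unfolding sg2_def by blast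
qed

lemma nat_submonoid_glue:
  assumes "nat_submonoid H"
  shows "nat_submonoid (glue d H c)"
proof
  show "0 \<in> glue d H c" unfolding glue_def using nat_submonoid.zero_mem[OF assms] by force
  fix x y assume "x \<in> glue d H c" "y \<in> glue d H c"
  then obtain h l h' l' where "h \<in> H" "h' \<in> H" "x = d * h + l * c" "y = d * h' + l' * c"
    unfolding glue_def by blast
  moreover have "h + h' \<in> H" using calculation nat_submonoid.add_mem[OF assms] by blast
  ultimately show "x + y \<in> glue d H c" unfolding glue_def
    by (intro CollectI exI[of _ "h + h'"] exI[of _ "l + l'"]) (simp add: algebra_simps)
qed

lemma int_image_sg2_iff: "z \<in> int ` sg2 a b \<longleftrightarrow> (\<exists>i j :: nat. z = int i * int a + int j * int b)"
  unfolding sg2_def by force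

lemma sg2_not_mem_both:
  assumes a: "0 < a" and b: "0 < b" and ab: "coprime a b"
    and "w \<in> int ` sg2 a b" "int a * int b - int a - int b - w \<in> int ` sg2 a b"
  shows False
proof -
  obtain i j i' j' :: nat where "w = int i * int a + int j * int b"
    "int a * int b - int a - int b - w = int i' * int a + int j' * int b"
    using assms(4,5) unfolding int_image_sg2_iff by blast
  moreover define x y where "x = i + i' + 1" and "y = j + j' + 1"
  ultimately have "int (x * a + y * b) = int (a * b)" by (simp add: algebra_simps)
  then have eq: "x * a + y * b = a * b" by (simp only: of_nat_eq_iff)
  then have "a dvd x * a + y * b" "b dvd x * a + y * b" by simp_all
  then have "a dvd y * b" "b dvd x * a" by (simp_all add: dvd_add_right_iff dvd_add_left_iff)
  then have "a dvd y" "b dvd x"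
    using ab by (simp_all add: coprime_dvd_mult_left_iff coprime_commute[of a b])
  then have "a \<le> y" "b \<le> x" by (simp_all add: x_def y_def dvd_imp_le)
  then have "b * a + a * b \<le> x * a + y * b" by (intro add_mono mult_right_mono) auto
  then show False using eq a b by simp
qed

lemma sg2_mem_either:
  assumes a: "0 < a" and ab: "coprime a b"
  shows "w \<in> int ` sg2 a b \<or> int a * int b - int a - int b - w \<in> int ` sg2 a b"
proof -
  obtain u v where uv: "u * int a + v * int b = 1"
    using ab bezout_int[of "int a" "int b"] by (auto simp: coprime_iff_gcd_eq_1 gcd_int_int_eq)
  define q r where "q = (w * v) div int a" and "r = (w * v) mod int a"
  have wv: "int a * q + r = w * v" unfolding q_def r_def by (rule mult_div_mod_eq)
  define i where "i = w * u + q * int b"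
  have "i * int a + r * int b = w * u * int a + int b * (int a * q + r)"
    unfolding i_def by (simp add: algebra_simps)
  also have "\<dots> = w * (u * int a + v * int b)" unfolding wv by (simp add: algebra_simps)
  finally have w: "w = i * int a + r * int b" using uv by simp
  have r: "0 \<le> r" "r < int a" unfolding r_def using a by auto
  show ?thesis
  proof (cases "0 \<le> i")
    case True
    then have "w = int (nat i) * int a + int (nat r) * int b" using w r by simp
    then show ?thesis unfolding int_image_sg2_iff by blast
  next
    case False
    have "int a * int b - int a - int b - w = (- 1 - i) * int a + (int a - 1 - r) * int b"
      using w by (simp add: algebra_simps)
    also have "\<dots> = int (nat (- 1 - i)) * int a + int (nat (int a - 1 - r)) * int b"
      using False r by simp
    finally show ?thesis unfolding int_image_sg2_iff by blast
  qed
qed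

theorem symmetric_frobenius_sg2:
  assumes "0 < a" "0 < b" "coprime a b"
  shows "symmetric_frobenius (sg2 a b) (int a * int b - int a - int b)"
  unfolding symmetric_frobenius_def using sg2_not_mem_both[OF assms] sg2_mem_either[OF assms(1,3)]
  by blast

lemma int_image_glue_iff:
  "z \<in> int ` glue d H c \<longleftrightarrow> (\<exists>h\<in>H. \<exists>l :: nat. z = int d * int h + int l * int c)"
  unfolding glue_def by force

text \<open>Membership in the gluing is decided by the unique \<open>0 \<le> l < d\<close> with \<open>z \<equiv> l c (mod d)\<close>: any other
  representation \<open>z = d h' + l' c\<close> has \<open>l' = l + t d\<close> with \<open>t \<ge> 0\<close>, and \<open>t c\<close> is absorbed into \<open>H\<close>.\<close>

lemma glue_mem_iff_residue:
  assumes H: "nat_submonoid H" and c: "c \<in> H" and cd: "coprime c d"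
    and l: "0 \<le> l" "l < int d" and dvd: "int d dvd z - l * int c"
  shows "z \<in> int ` glue d H c \<longleftrightarrow> (z - l * int c) div int d \<in> int ` H"
proof
  assume "(z - l * int c) div int d \<in> int ` H"
  then obtain h where "h \<in> H" "(z - l * int c) div int d = int h" by blast
  moreover have "z - l * int c = int d * ((z - l * int c) div int d)" using dvd by simp
  ultimately have "z = int d * int h + int (nat l) * int c" using l by simp
  then show "z \<in> int ` glue d H c" unfolding int_image_glue_iff using \<open>h \<in> H\<close> by blast
next
  assume "z \<in> int ` glue d H c"
  then obtain h l' where h: "h \<in> H" and z: "z = int d * int h + int l' * int c"
    unfolding int_image_glue_iff by blast
  have "int d dvd (z - l * int c) - int d * int h" using dvd by simp
  then have "int d dvd (int l' - l) * int c" by (simp add: z algebra_simps)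
  moreover have "coprime (int d) (int c)" using cd by (simp add: coprime_commute)
  ultimately have "int d dvd int l' - l" by (simp add: coprime_dvd_mult_left_iff)
  then obtain t where t: "int l' - l = int d * t" by blast
  have "0 \<le> t"
  proof (rule ccontr)
    assume "\<not> 0 \<le> t"
    then have "int d * t \<le> int d * (- 1)" by (intro mult_left_mono) auto
    then show False using t l by linarith
  qed
  have "z - l * int c = int d * int (h + nat t * c)"
    using z t \<open>0 \<le> t\<close> by (simp add: algebra_simps)
  moreover have "h + nat t * c \<in> H"
    using h c nat_submonoid.add_mem[OF H] nat_submonoid.mult_mem[OF H] by blast
  moreover have "0 < d" using l by simp
  ultimately have "(z - l * int c) div int d = int (h + nat t * c)" by simp
  then show "(z - l * int c) div int d \<in> int ` H" using \<open>h + nat t * c \<in> H\<close> by blast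
qed

theorem symmetric_frobenius_glue:
  assumes H: "nat_submonoid H" and c: "c \<in> H" and d: "0 < d" and cd: "coprime c d"
    and sym: "symmetric_frobenius H F"
  shows "symmetric_frobenius (glue d H c) (int d * F + (int d - 1) * int c)"
  unfolding symmetric_frobenius_def
proof
  fix z
  let ?G = "int d * F + (int d - 1) * int c"
  obtain u v where uv: "u * int c + v * int d = 1"
    using cd bezout_int[of "int c" "int d"] by (auto simp: coprime_iff_gcd_eq_1 gcd_int_int_eq)
  define l where "l = (z * u) mod int d"
  have l: "0 \<le> l" "l < int d" unfolding l_def using d by auto
  have "z - l * int c = z * (u * int c + v * int d) - l * int c" using uv by simp
  also have "\<dots> = (z * u - l) * int c + int d * (z * v)" by (simp add: algebra_simps)
  finally have "z - l * int c = (z * u - l) * int c + int d * (z * v)" .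
  moreover have "int d dvd z * u - l" unfolding l_def by (rule dvd_minus_mod)
  ultimately have dvd: "int d dvd z - l * int c" by simp
  then obtain k where k: "z - l * int c = int d * k" by blast
  let ?l' = "int d - 1 - l"
  have reflected: "?G - z - ?l' * int c = int d * (F - k)"
    using k by (simp add: algebra_simps)
  then have dvd': "int d dvd ?G - z - ?l' * int c" by simp
  have "(?G - z - ?l' * int c) div int d = F - (z - l * int c) div int d"
    unfolding reflected k using d by simp
  then have "?G - z \<in> int ` glue d H c \<longleftrightarrow> F - (z - l * int c) div int d \<in> int ` H"
    using glue_mem_iff_residue[OF H c cd _ _ dvd'] l by simp
  moreover have "z \<in> int ` glue d H c \<longleftrightarrow> (z - l * int c) div int d \<in> int ` H"
    by (rule glue_mem_iff_residue[OF H c cd l dvd])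
  ultimately show "z \<in> int ` glue d H c \<longleftrightarrow> ?G - z \<notin> int ` glue d H c"
    using sym unfolding symmetric_frobenius_def by blast
qed

lemma one_mem_sg2:
  assumes "1 \<in> sg2 a b"
  shows "a = 1 \<or> b = 1"
proof -
  obtain i j where "i * a + j * b = 1" using assms unfolding sg2_def by auto
  then have "i * a = 1 \<or> j * b = 1" by (auto simp: add_is_1)
  then show ?thesis by auto
qed

lemma frobenius_glue_nonneg:
  fixes a b c d :: nat
  assumes "0 < a" "0 < b" "2 \<le> c" "1 < d"
  shows "0 \<le> int d * (int a * int b - int a - int b) + (int d - 1) * int c"
proof (cases "a = 1 \<or> b = 1")
  case True
  then have "int a * int b - int a - int b = - 1" by auto
  moreover have "(int d - 1) * 2 \<le> (int d - 1) * int c" using assms(3,4) by (intro mult_left_mono) auto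
  ultimately show ?thesis using assms(4) by simp
next
  case False
  then have "1 * 1 \<le> (int a - 1) * (int b - 1)" using assms(1,2) by (intro mult_mono) auto
  then have "0 \<le> int a * int b - int a - int b" by (simp add: algebra_simps)
  then show ?thesis using assms(4) by simp
qed

theorem corollary4p4:
  fixes a b c d :: nat
  assumes "a > 0" and "b > 0" and "gcd a b = 1"
    and "card (min_gens (sg2 a b)) = 2"
    and "c \<in> sg2 a b" and "c > 0" and "c \<notin> {a, b}"
    and "d > 1" and "gcd c d = 1"
  shows "gorenstein_quot (sg3 (d * a) (d * b) c) ({0} :: 'k::field poly set)
    \<and> finite (gor_ideals (sg3 (d * a) (d * b) c) :: 'k poly set set)
    \<and> int (card (gor_ideals (sg3 (d * a) (d * b) c) :: 'k poly set set))
        = int d * (int a * int b - int a - int b) + (int d - 1) * int c + 1"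
proof -
  define F where "F = int d * (int a * int b - int a - int b) + (int d - 1) * int c"
  have ab: "coprime a b" and cd: "coprime c d" using assms(3,9) by (simp_all add: coprime_iff_gcd_eq_1)
  have "c \<noteq> 1" using assms(5,7) one_mem_sg2 by auto
  then have "0 \<le> F" unfolding F_def using frobenius_glue_nonneg assms(1,2,6,8) by simp
  have "symmetric_frobenius (glue d (sg2 a b) c) F"
    unfolding F_def using assms(8)
    by (intro symmetric_frobenius_glue nat_submonoid_sg2 symmetric_frobenius_sg2 assms(1,2,5) ab cd) simp
  then interpret symmetric_semigroup "sg3 (d * a) (d * b) c" "nat F"
    using \<open>0 \<le> F\<close> unfolding sg3_eq_glue
    by unfold_locales (simp_all add: nat_submonoid.zero_mem nat_submonoid.add_mem nat_submonoid_glue nat_submonoid_sg2)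
  show ?thesis unfolding F_def[symmetric] using gor_ideals_symmetric[where 'k = 'k] \<open>0 \<le> F\<close> by simp
qed

end
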